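(* Let $c$ be the ellipse $x^2/a_c^2+y^2/b_c^2=1$, $a_c>b_c>0$, with numerical eccentricity $m=\sqrt{a_c^2-b_c^2}/a_c$, and let $\mathrm{sn},\mathrm{cn},\mathrm{dn}$ be the Jacobian elliptic functions and $K$ the complete elliptic integral of the first kind with modulus $m$. Then the mapping \[\mathbf Y:\ U\times V\to\mathbb R^2,\quad (\tilde u,\tilde v)\mapsto\left(-a_c\frac{\mathrm{sn}\,\tilde u\ \mathrm{dn}\,\tilde v}{\mathrm{cn}\,\tilde v},\ b_c\frac{\mathrm{cn}\,\tilde u}{\mathrm{cn}\,\tilde v}\right),\quad U=\{\tilde u: 0\le\tilde u<4K\},\ V=\{\tilde v: 0\le\tilde v<K\},\] is injective and parametrizes the exterior of $c$ in such a way that the curves $\tilde u=\text{const}$ are branches of hyperbolas confocal with $c$, the curves $\tilde v=\text{const}$ are ellipses confocal with $c$, and the curves $\tilde u\pm\tilde v=\text{const}$ are tangent lines of $c$.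
   Context: Confocal conics of $c$: $\frac{x^2}{a_c^2+k}+\frac{y^2}{b_c^2+k}=1$, $k\in\mathbb R\setminus\{-a_c^2,-b_c^2\}$. Modulus convention: $\mathrm{sn}\,\tilde u=\sin\varphi$, $\mathrm{cn}\,\tilde u=\cos\varphi$ where $\tilde u=\int_0^\varphi(1-m^2\sin^2\psi)^{-1/2}d\psi$, $\mathrm{dn}=\sqrt{1-m^2\mathrm{sn}^2}$, $K=\int_0^{\pi/2}(1-m^2\sin^2\psi)^{-1/2}d\psi$. *)

theory Defs
  imports "HOL-Analysis.Analysis"
begin

definition ell_F :: "real \<Rightarrow> real \<Rightarrow> real" where
  "ell_F m \<phi> =
     (if 0 \<le> \<phi> then integral {0..\<phi>} (\<lambda>\<psi>. 1 / sqrt (1 - m\<^sup>2 * (sin \<psi>)\<^sup>2))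
      else - integral {\<phi>..0} (\<lambda>\<psi>. 1 / sqrt (1 - m\<^sup>2 * (sin \<psi>)\<^sup>2)))"

definition jam :: "real \<Rightarrow> real \<Rightarrow> real" where
  "jam m u = (THE \<phi>. ell_F m \<phi> = u)"

definition jsn :: "real \<Rightarrow> real \<Rightarrow> real" where "jsn m u = sin (jam m u)"
definition jcn :: "real \<Rightarrow> real \<Rightarrow> real" where "jcn m u = cos (jam m u)"
definition jdn :: "real \<Rightarrow> real \<Rightarrow> real" where "jdn m u = sqrt (1 - m\<^sup>2 * (jsn m u)\<^sup>2)"

definition ellK :: "real \<Rightarrow> real" where "ellK m = ell_F m (pi / 2)"

definition ecc :: "real \<Rightarrow> real \<Rightarrow> real" where "ecc a b = sqrt (a\<^sup>2 - b\<^sup>2) / a"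

definition ellipse_c :: "real \<Rightarrow> real \<Rightarrow> (real \<times> real) set" where
  "ellipse_c a b = {(x, y). x\<^sup>2 / a\<^sup>2 + y\<^sup>2 / b\<^sup>2 = 1}"

definition confocal :: "real \<Rightarrow> real \<Rightarrow> real \<Rightarrow> (real \<times> real) set" where
  "confocal a b k = {(x, y). x\<^sup>2 / (a\<^sup>2 + k) + y\<^sup>2 / (b\<^sup>2 + k) = 1}"

definition tangent_line :: "real \<Rightarrow> real \<Rightarrow> real \<times> real \<Rightarrow> (real \<times> real) set" where
  "tangent_line a b p0 = {(x, y). x * fst p0 / a\<^sup>2 + y * snd p0 / b\<^sup>2 = 1}"

definition Ymap :: "real \<Rightarrow> real \<Rightarrow> real \<Rightarrow> real \<Rightarrow> real \<times> real" where
  "Ymap a b u v =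
     (let m = ecc a b in
      (- a * jsn m u * jdn m v / jcn m v, b * jcn m u / jcn m v))"

end

(*
  The amplitude jam m is the inverse of the strictly increasing function ell_F m, with
  ell_F m (pi/2) = K and ell_F m (2 pi) = 4 K. Hence u \<mapsto> (sn u, cn u) maps [0, 4K)
  bijectively onto the unit circle and v \<mapsto> b sn v / cn v maps [0, K) bijectively onto [0, \<infinity>).

  For fixed v the point Y(u, v) is obtained from (sn u, cn u) by scaling the axes with
  -a dn v / cn v and b / cn v, and since a\<^sup>2 dn\<^sup>2 v = a\<^sup>2 cn\<^sup>2 v + b\<^sup>2 sn\<^sup>2 v these are the
  semi-axes of the confocal ellipse with parameter k = b\<^sup>2 sn\<^sup>2 v / cn\<^sup>2 v. For k \<ge> 0 the
  value x\<^sup>2/(a\<^sup>2 + k) + y\<^sup>2/(b\<^sup>2 + k) strictly decreases in k, so every point outside c lies on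
  exactly one such ellipse; this gives injectivity and the image. For fixed u the same
  identity shows that Y(u, v) lies on the confocal hyperbola with k = -(a\<^sup>2 cn\<^sup>2 u + b\<^sup>2 sn\<^sup>2 u),
  on the branch where x has the sign of -sn u.

  The addition theorems for sn and cn (the right-hand sides are constant along u + v = w,
  as differentiation shows) give cn v = sn u sn w dn v + cn u cn w for w = u \<plusminus> v, which says
  exactly that Y(u, v) lies on the tangent of c at (-a sn w, b cn w).
*)
theory Submission
  imports Defs
begin

section \<open>The incomplete elliptic integral and the amplitude\<close>

definition ell_integrand :: "real \<Rightarrow> real \<Rightarrow> real" where
  "ell_integrand m \<psi> = 1 / sqrt (1 - m\<^sup>2 * (sin \<psi>)\<^sup>2)"

lemma ell_F_0 [simp]: "ell_F m 0 = 0"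
  by (simp add: ell_F_def)

locale elliptic_modulus =
  fixes m :: real
  assumes modulus_sq_less_1: "m\<^sup>2 < 1"
begin

lemma one_minus_modulus_sq_mult_pos: "z \<le> 1 \<Longrightarrow> 0 < 1 - m\<^sup>2 * z"
  using mult_left_mono[of z 1 "m\<^sup>2"] modulus_sq_less_1 by simp

lemma ell_radicand_pos: "0 < 1 - m\<^sup>2 * (sin x)\<^sup>2"
  by (rule one_minus_modulus_sq_mult_pos) (simp add: abs_square_le_1)

lemma ell_integrand_ge_1: "1 \<le> ell_integrand m x"
  using ell_radicand_pos[of x] by (simp add: ell_integrand_def)

lemma continuous_on_ell_integrand: "continuous_on S (ell_integrand m)"
  unfolding ell_integrand_def
  by (intro continuous_intros) (use ell_radicand_pos in \<open>auto simp: less_le\<close>)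

lemma ell_F_eq_integral_diff:
  assumes "c \<le> 0" "c \<le> \<phi>"
  shows "ell_F m \<phi> = integral {c..\<phi>} (ell_integrand m) - integral {c..0} (ell_integrand m)"
proof -
  have int: "ell_integrand m integrable_on {s..t}" for s t
    by (rule integrable_continuous_real[OF continuous_on_ell_integrand])
  show ?thesis
  proof (cases "0 \<le> \<phi>")
    case True
    then show ?thesis
      using Henstock_Kurzweil_Integration.integral_combine[OF assms(1) True int]
      by (simp add: ell_F_def ell_integrand_def[abs_def])
  next
    case False
    then show ?thesis
      using Henstock_Kurzweil_Integration.integral_combine[OF assms(2) _ int, of 0]
      by (simp add: ell_F_def ell_integrand_def[abs_def])
  qed
qed

lemma has_real_derivative_ell_F: "(ell_F m has_real_derivative ell_integrand m x) (at x)"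
proof -
  define c where "c = - \<bar>x\<bar> - 1"
  have c: "c \<le> 0" "c < x" by (auto simp: c_def)
  have "((\<lambda>y. integral {c..y} (ell_integrand m)) has_real_derivative ell_integrand m x)
      (at x within {c..x + 1})"
    by (rule integral_has_real_derivative) (use continuous_on_ell_integrand c in auto)
  then have "((\<lambda>y. integral {c..y} (ell_integrand m) - integral {c..0} (ell_integrand m))
      has_real_derivative ell_integrand m x) (at x)"
    using c by (auto intro!: derivative_eq_intros simp: at_within_Icc_at)
  then show ?thesis
    by (rule has_field_derivative_transform_within_open[of _ _ _ "{c<..}"])
       (use c ell_F_eq_integral_diff in auto)
qed

lemmas has_real_derivative_ell_F_chain [derivative_intros] =
  DERIV_chain2[OF has_real_derivative_ell_F]

lemma isCont_ell_F: "isCont (ell_F m) x"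
  using has_real_derivative_ell_F DERIV_isCont by blast

lemma strict_mono_ell_F: "strict_mono (ell_F m)"
proof (rule strict_monoI)
  fix x y :: real
  assume "x < y"
  then show "ell_F m x < ell_F m y"
    by (rule DERIV_pos_imp_increasing)
       (metis has_real_derivative_ell_F ell_integrand_ge_1 less_le_trans zero_less_one)
qed

lemma mono_ell_F_minus_id: "mono (\<lambda>\<phi>. ell_F m \<phi> - \<phi>)"
proof (rule monoI)
  fix x y :: real
  assume "x \<le> y"
  then show "ell_F m x - x \<le> ell_F m y - y"
  proof (rule DERIV_nonneg_imp_nondecreasing[where f = "\<lambda>\<phi>. ell_F m \<phi> - \<phi>"])
    fix z
    have "((\<lambda>\<phi>. ell_F m \<phi> - \<phi>) has_real_derivative ell_integrand m z - 1) (at z)"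
      by (auto intro!: derivative_eq_intros)
    then show "\<exists>d. ((\<lambda>\<phi>. ell_F m \<phi> - \<phi>) has_real_derivative d) (at z) \<and> 0 \<le> d"
      using ell_integrand_ge_1[of z] by auto
  qed
qed

lemma surj_ell_F: "surj (ell_F m)"
proof -
  have "\<exists>\<phi>. ell_F m \<phi> = u" for u
  proof (cases "0 \<le> u")
    case True
    then have "u \<le> ell_F m u" using monoD[OF mono_ell_F_minus_id True] by simp
    then show ?thesis using IVT[of "ell_F m" 0 u u] True isCont_ell_F by auto
  next
    case False
    then have "ell_F m u \<le> u" using monoD[OF mono_ell_F_minus_id, of u 0] by simp
    then show ?thesis using IVT[of "ell_F m" u u 0] False isCont_ell_F by auto
  qed
  then show ?thesis by (metis surjI)
qed

lemma ell_F_jam [simp]: "ell_F m (jam m u) = u"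
proof -
  have "\<exists>!\<phi>. ell_F m \<phi> = u"
    using surj_ell_F strict_mono_eq[OF strict_mono_ell_F] by (metis surjD)
  then show ?thesis unfolding jam_def by (rule theI')
qed

lemma jam_ell_F [simp]: "jam m (ell_F m \<phi>) = \<phi>"
  using ell_F_jam strict_mono_eq[OF strict_mono_ell_F] by blast

lemma jam_0 [simp]: "jam m 0 = 0"
  using jam_ell_F[of 0] by simp

lemma le_jam_iff: "\<phi> \<le> jam m u \<longleftrightarrow> ell_F m \<phi> \<le> u"
  using strict_mono_less_eq[OF strict_mono_ell_F, of \<phi> "jam m u"] by simp

lemma jam_less_iff: "jam m u < \<phi> \<longleftrightarrow> u < ell_F m \<phi>"
  using strict_mono_less[OF strict_mono_ell_F, of "jam m u" \<phi>] by simp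

lemma bij_betw_jam: "bij_betw (jam m) {ell_F m s..<ell_F m t} {s..<t}"
  by (rule bij_betw_byWitness[where f' = "ell_F m"])
     (auto simp: le_jam_iff jam_less_iff strict_mono_less_eq[OF strict_mono_ell_F]
        strict_mono_less[OF strict_mono_ell_F])

lemma ell_F_add_pi: "ell_F m (\<phi> + pi) = ell_F m \<phi> + ell_F m pi"
proof -
  have "((\<lambda>x. ell_F m (x + pi) - ell_F m x) has_real_derivative 0) (at x)" for x
    by (auto intro!: derivative_eq_intros simp: ell_integrand_def)
  from DERIV_isconst_all[OF allI, OF this, of \<phi> 0] show ?thesis by simp
qed

lemma ell_F_pi_minus: "ell_F m (pi - \<phi>) = ell_F m pi - ell_F m \<phi>"
proof -
  have "((\<lambda>x. ell_F m (pi - x) + ell_F m x) has_real_derivative 0) (at x)" for x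
    by (auto intro!: derivative_eq_intros simp: ell_integrand_def)
  from DERIV_isconst_all[OF allI, OF this, of \<phi> 0] show ?thesis by simp
qed

lemma ell_F_2pi: "ell_F m (2 * pi) = 4 * ellK m"
  using ell_F_add_pi[of pi] ell_F_pi_minus[of "pi / 2"] by (simp add: ellK_def)

lemma bij_betw_jam_period: "bij_betw (jam m) {0..<4 * ellK m} {0..<2 * pi}"
  using bij_betw_jam[of 0 "2 * pi"] by (simp add: ell_F_2pi)

lemma bij_betw_jam_quarter: "bij_betw (jam m) {0..<ellK m} {0..<pi / 2}"
  using bij_betw_jam[of 0 "pi / 2"] by (simp add: ellK_def)

end

section \<open>Jacobi elliptic functions\<close>

lemma jsn_sq_add_jcn_sq [simp]: "(jsn m u)\<^sup>2 + (jcn m u)\<^sup>2 = 1"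
  by (simp add: jsn_def jcn_def)

lemma jsn_sq_le_1: "(jsn m u)\<^sup>2 \<le> 1"
  by (metis jsn_sq_add_jcn_sq le_add_same_cancel1 zero_le_power2)

lemma const_along_antidiagonal:
  fixes f :: "real \<Rightarrow> real \<Rightarrow> real"
  assumes "\<And>w x. ((\<lambda>x. f x (w - x)) has_real_derivative 0) (at x)"
  shows "f p q = f 0 (p + q)"
  using DERIV_isconst_all[of "\<lambda>x. f x (p + q - x)" p 0] assms by simp

context elliptic_modulus
begin

lemma isCont_jam: "isCont (jam m) u"
  using isCont_inverse_function[where f = "ell_F m" and g = "jam m" and d = 1 and x = "jam m u"]
    isCont_ell_F by simp

lemma jdn_pos: "0 < jdn m u"
  using ell_radicand_pos[of "jam m u"] by (simp add: jdn_def jsn_def)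

lemma jdn_sq: "(jdn m u)\<^sup>2 = 1 - m\<^sup>2 * (jsn m u)\<^sup>2"
  using ell_radicand_pos[of "jam m u"] by (simp add: jdn_def jsn_def)

lemma jcn_pos: "0 \<le> v \<Longrightarrow> v < ellK m \<Longrightarrow> 0 < jcn m v"
  using bij_betw_apply[OF bij_betw_jam_quarter, of v] by (simp add: jcn_def cos_gt_zero_pi)

lemma has_real_derivative_jam: "(jam m has_real_derivative jdn m u) (at u)"
proof -
  have "(jam m has_real_derivative inverse (ell_integrand m (jam m u))) (at u)"
    by (rule DERIV_inverse_function[where a = "u - 1" and b = "u + 1"])
       (use has_real_derivative_ell_F ell_integrand_ge_1[of "jam m u"] isCont_jam in auto)
  then show ?thesis by (simp add: ell_integrand_def jdn_def jsn_def)
qed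

lemmas has_real_derivative_jam_chain [derivative_intros] = DERIV_chain2[OF has_real_derivative_jam]

lemma has_real_derivative_jsn [derivative_intros]:
  "(f has_real_derivative f') (at x) \<Longrightarrow>
    ((\<lambda>x. jsn m (f x)) has_real_derivative jcn m (f x) * jdn m (f x) * f') (at x)"
  unfolding jsn_def jcn_def by (auto intro!: derivative_eq_intros)

lemma has_real_derivative_jcn [derivative_intros]:
  "(f has_real_derivative f') (at x) \<Longrightarrow>
    ((\<lambda>x. jcn m (f x)) has_real_derivative - jsn m (f x) * jdn m (f x) * f') (at x)"
  unfolding jsn_def jcn_def by (auto intro!: derivative_eq_intros)

lemma has_real_derivative_jdn [derivative_intros]:
  assumes "(f has_real_derivative f') (at x)"
  shows "((\<lambda>x. jdn m (f x)) has_real_derivative - m\<^sup>2 * jsn m (f x) * jcn m (f x) * f') (at x)"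
proof -
  have r: "0 < 1 - m\<^sup>2 * (jsn m (f x))\<^sup>2" using ell_radicand_pos by (simp add: jsn_def)
  have "((\<lambda>x. 1 - m\<^sup>2 * (jsn m (f x))\<^sup>2) has_real_derivative
      - (2 * m\<^sup>2 * jsn m (f x) * (jcn m (f x) * jdn m (f x) * f'))) (at x)"
    using assms by (auto intro!: derivative_eq_intros)
  from DERIV_chain2[OF DERIV_real_sqrt[OF r] this]
  have "((\<lambda>x. jdn m (f x)) has_real_derivative inverse (jdn m (f x)) / 2
      * - (2 * m\<^sup>2 * jsn m (f x) * (jcn m (f x) * jdn m (f x) * f'))) (at x)"
    by (simp only: jdn_def)
  then show ?thesis using jdn_pos[of "f x"] by (simp add: field_simps)
qed

lemma jsn_0 [simp]: "jsn m 0 = 0" and jcn_0 [simp]: "jcn m 0 = 1" and jdn_0 [simp]: "jdn m 0 = 1"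
  by (simp_all add: jsn_def jcn_def jdn_def)

lemma jacobi_denominator_nonzero: "1 - m\<^sup>2 * (jsn m p)\<^sup>2 * (jsn m q)\<^sup>2 \<noteq> 0"
proof -
  have "(jsn m p)\<^sup>2 * (jsn m q)\<^sup>2 \<le> 1"
    by (simp add: jsn_sq_le_1 mult_le_one)
  then have "0 < 1 - m\<^sup>2 * ((jsn m p)\<^sup>2 * (jsn m q)\<^sup>2)"
    by (rule one_minus_modulus_sq_mult_pos)
  then show ?thesis by (simp add: mult.assoc)
qed

lemma jsn_add:
  "jsn m (p + q) = (jsn m p * jcn m q * jdn m q + jsn m q * jcn m p * jdn m p)
     / (1 - m\<^sup>2 * (jsn m p)\<^sup>2 * (jsn m q)\<^sup>2)"
proof -
  let ?f = "\<lambda>p q. (jsn m p * jcn m q * jdn m q + jsn m q * jcn m p * jdn m p)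
     / (1 - m\<^sup>2 * (jsn m p)\<^sup>2 * (jsn m q)\<^sup>2)"
  have "((\<lambda>x. ?f x (w - x)) has_real_derivative 0) (at x)" for w x
    by (rule derivative_eq_intros refl jacobi_denominator_nonzero)+
       (use jsn_sq_add_jcn_sq[of m x] jsn_sq_add_jcn_sq[of m "w - x"] jdn_sq[of x] jdn_sq[of "w - x"]
         in \<open>simp add: jacobi_denominator_nonzero; algebra\<close>)
  from const_along_antidiagonal[of ?f, OF this] show ?thesis by simp
qed

lemma jcn_add:
  "jcn m (p + q) = (jcn m p * jcn m q - jsn m p * jsn m q * jdn m p * jdn m q)
     / (1 - m\<^sup>2 * (jsn m p)\<^sup>2 * (jsn m q)\<^sup>2)"
proof -
  let ?f = "\<lambda>p q. (jcn m p * jcn m q - jsn m p * jsn m q * jdn m p * jdn m q)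
     / (1 - m\<^sup>2 * (jsn m p)\<^sup>2 * (jsn m q)\<^sup>2)"
  have "((\<lambda>x. ?f x (w - x)) has_real_derivative 0) (at x)" for w x
    by (rule derivative_eq_intros refl jacobi_denominator_nonzero)+
       (use jsn_sq_add_jcn_sq[of m x] jsn_sq_add_jcn_sq[of m "w - x"] jdn_sq[of x] jdn_sq[of "w - x"]
         in \<open>simp add: jacobi_denominator_nonzero; algebra\<close>)
  from const_along_antidiagonal[of ?f, OF this] show ?thesis by simp
qed

lemma jcn_eq_jsn_jsn_add_plus_jcn_jcn_add:
  "jcn m q = jsn m p * jsn m (p + q) * jdn m q + jcn m p * jcn m (p + q)"
proof -
  define D where "D = 1 - m\<^sup>2 * (jsn m p)\<^sup>2 * (jsn m q)\<^sup>2"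
  have "D \<noteq> 0" using jacobi_denominator_nonzero by (simp add: D_def)
  moreover have "jsn m p * (jsn m p * jcn m q * jdn m q + jsn m q * jcn m p * jdn m p) * jdn m q
      + jcn m p * (jcn m p * jcn m q - jsn m p * jsn m q * jdn m p * jdn m q) = jcn m q * D"
    unfolding D_def
    using jsn_sq_add_jcn_sq[of m p] jsn_sq_add_jcn_sq[of m q] jdn_sq[of p] jdn_sq[of q] by algebra
  ultimately show ?thesis
    unfolding jsn_add jcn_add D_def[symmetric] by (simp add: field_simps) (simp flip: distrib_left)
qed

end

section \<open>Ellipses and the confocal family\<close>

lemma bij_betw_sin_cos: "bij_betw (\<lambda>t. (sin t, cos t)) {0..<2 * pi} (ellipse_c 1 1)"
proof (rule bij_betw_imageI)
  show "inj_on (\<lambda>t. (sin t, cos t)) {0..<2 * pi}"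
  proof (rule inj_onI)
    fix s t
    assume s: "s \<in> {0..<2 * pi}" and t: "t \<in> {0..<2 * pi}" and "(sin s, cos s) = (sin t, cos t)"
    then obtain n :: int where n: "s = t + 2 * pi * n"
      using sin_cos_eq_iff by auto
    with s t have "\<bar>2 * pi * n\<bar> < 2 * pi" by auto
    then have "\<bar>n\<bar> < 1" by (simp add: abs_mult)
    then show "s = t" using n by simp
  qed
  show "(\<lambda>t. (sin t, cos t)) ` {0..<2 * pi} = ellipse_c 1 1"
  proof
    show "(\<lambda>t. (sin t, cos t)) ` {0..<2 * pi} \<subseteq> ellipse_c 1 1"
      by (auto simp: ellipse_c_def)
    show "ellipse_c 1 1 \<subseteq> (\<lambda>t. (sin t, cos t)) ` {0..<2 * pi}"
    proof clarify
      fix x y :: real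
      assume "(x, y) \<in> ellipse_c 1 1"
      then have "y\<^sup>2 + x\<^sup>2 = 1" by (simp add: ellipse_c_def)
      then obtain t where "0 \<le> t" "t < 2 * pi" "y = cos t" "x = sin t"
        by (rule sincos_total_2pi)
      then show "(x, y) \<in> (\<lambda>t. (sin t, cos t)) ` {0..<2 * pi}" by auto
    qed
  qed
qed

lemma bij_betw_scale_ellipse_c:
  assumes "\<alpha> \<noteq> 0" "\<beta> \<noteq> 0"
  shows "bij_betw (\<lambda>(s, c). (\<alpha> * s, \<beta> * c)) (ellipse_c 1 1) (ellipse_c \<alpha> \<beta>)"
  by (rule bij_betw_byWitness[where f' = "\<lambda>(x, y). (x / \<alpha>, y / \<beta>)"])
     (use assms in \<open>auto simp: ellipse_c_def power_mult_distrib power_divide\<close>)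

lemma bij_betw_scaled_tan_sq:
  assumes "0 < b"
  shows "bij_betw (\<lambda>\<phi>. (b * tan \<phi>)\<^sup>2) {0..<pi / 2} {0..}"
proof (rule bij_betw_byWitness[where f' = "\<lambda>k. arctan (sqrt k / b)"])
  have "0 \<le> tan \<phi>" if "0 \<le> \<phi>" "\<phi> < pi / 2" for \<phi>
    using that tan_gt_zero[of \<phi>] by (cases "\<phi> = 0") auto
  then show "\<forall>\<phi>\<in>{0..<pi / 2}. arctan (sqrt ((b * tan \<phi>)\<^sup>2) / b) = \<phi>"
    using assms by (auto simp: arctan_tan)
  show "\<forall>k\<in>{0..}. (b * tan (arctan (sqrt k / b)))\<^sup>2 = k"
    using assms by (simp add: tan_arctan power_divide)
  show "(\<lambda>\<phi>. (b * tan \<phi>)\<^sup>2) ` {0..<pi / 2} \<subseteq> {0..}" by auto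
  show "(\<lambda>k. arctan (sqrt k / b)) ` {0..} \<subseteq> {0..<pi / 2}"
    using assms arctan_ubound by (auto simp: zero_le_arctan_iff)
qed

lemma confocal_eq_ellipse_c: "\<alpha>\<^sup>2 = a\<^sup>2 + k \<Longrightarrow> \<beta>\<^sup>2 = b\<^sup>2 + k \<Longrightarrow> confocal a b k = ellipse_c \<alpha> \<beta>"
  by (simp add: confocal_def ellipse_c_def)

lemma confocal_sum_strict_antimono:
  fixes a b x y k k' :: real
  assumes "a \<noteq> 0" "b \<noteq> 0" "(x, y) \<noteq> (0, 0)" "0 \<le> k" "k < k'"
  shows "x\<^sup>2 / (a\<^sup>2 + k') + y\<^sup>2 / (b\<^sup>2 + k') < x\<^sup>2 / (a\<^sup>2 + k) + y\<^sup>2 / (b\<^sup>2 + k)"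
proof -
  have "0 < a\<^sup>2 + k" "0 < b\<^sup>2 + k" using assms by (simp_all add: add_pos_nonneg)
  then have mono: "z\<^sup>2 / (c + k') \<le> z\<^sup>2 / (c + k)" and strict: "z \<noteq> 0 \<Longrightarrow> z\<^sup>2 / (c + k') < z\<^sup>2 / (c + k)"
    if "0 < c + k" for c z :: real
    using that assms(5) by (auto intro!: divide_left_mono divide_strict_left_mono)
  from assms(3) have "x \<noteq> 0 \<or> y \<noteq> 0" by auto
  then show ?thesis
  proof
    assume "x \<noteq> 0"
    then show ?thesis
      using strict[of "a\<^sup>2" x] mono[of "b\<^sup>2" y] \<open>0 < a\<^sup>2 + k\<close> \<open>0 < b\<^sup>2 + k\<close> by linarith
  next
    assume "y \<noteq> 0"
    then show ?thesis
      using mono[of "a\<^sup>2" x] strict[of "b\<^sup>2" y] \<open>0 < a\<^sup>2 + k\<close> \<open>0 < b\<^sup>2 + k\<close> by linarith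
  qed
qed

lemma confocal_parameter_unique:
  assumes "a \<noteq> 0" "b \<noteq> 0" "0 \<le> k" "0 \<le> k'" "p \<in> confocal a b k" "p \<in> confocal a b k'"
  shows "k = k'"
proof -
  obtain x y where p: "p = (x, y)" by fastforce
  then have "(x, y) \<noteq> (0, 0)" using assms(5) by (auto simp: confocal_def)
  then show ?thesis
  proof (cases k k' rule: linorder_cases)
    case less
    from confocal_sum_strict_antimono[OF assms(1,2) \<open>(x, y) \<noteq> (0, 0)\<close> assms(3) less]
    show ?thesis using assms(5,6) p by (simp add: confocal_def)
  next
    case greater
    from confocal_sum_strict_antimono[OF assms(1,2) \<open>(x, y) \<noteq> (0, 0)\<close> assms(4) greater]
    show ?thesis using assms(5,6) p by (simp add: confocal_def)
  qed
qed

lemma confocal_subset_exterior: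
  assumes "a \<noteq> 0" "b \<noteq> 0" "0 \<le> k"
  shows "confocal a b k \<subseteq> {(x, y). x\<^sup>2 / a\<^sup>2 + y\<^sup>2 / b\<^sup>2 \<ge> 1}"
proof clarify
  fix x y :: real
  assume "(x, y) \<in> confocal a b k"
  moreover have "x\<^sup>2 / (a\<^sup>2 + k) \<le> x\<^sup>2 / a\<^sup>2" "y\<^sup>2 / (b\<^sup>2 + k) \<le> y\<^sup>2 / b\<^sup>2"
    using assms by (auto intro!: divide_left_mono mult_pos_pos add_pos_nonneg)
  ultimately show "x\<^sup>2 / a\<^sup>2 + y\<^sup>2 / b\<^sup>2 \<ge> 1" by (simp add: confocal_def)
qed

lemma exterior_point_in_confocal:
  assumes "a \<noteq> 0" "b \<noteq> 0" "x\<^sup>2 / a\<^sup>2 + y\<^sup>2 / b\<^sup>2 \<ge> 1"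
  shows "\<exists>k\<ge>0. (x, y) \<in> confocal a b k"
proof -
  define q where "q k = x\<^sup>2 / (a\<^sup>2 + k) + y\<^sup>2 / (b\<^sup>2 + k)" for k
  define r where "r = x\<^sup>2 + y\<^sup>2"
  have "r \<noteq> 0" using assms(3) by (auto simp: r_def)
  then have "0 < r" by (simp add: r_def add_nonneg_nonneg order_le_neq_trans)
  have "q r \<le> x\<^sup>2 / r + y\<^sup>2 / r"
    unfolding q_def using \<open>0 < r\<close>
    by (intro add_mono divide_left_mono mult_pos_pos add_nonneg_pos) auto
  also have "\<dots> = 1" using \<open>r \<noteq> 0\<close> by (simp add: r_def add_divide_distrib[symmetric])
  finally have "q r \<le> 1" .
  moreover have "1 \<le> q 0" using assms(3) by (simp add: q_def)
  moreover have "isCont q k" if "0 \<le> k" for k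
  proof -
    have "0 < a\<^sup>2 + k" "0 < b\<^sup>2 + k" using assms(1,2) that by (simp_all add: add_pos_nonneg)
    then show ?thesis unfolding q_def by (intro continuous_intros) auto
  qed
  ultimately obtain k where "0 \<le> k" "q k = 1"
    using IVT2[of q r 1 0] \<open>0 < r\<close> by force
  then show ?thesis by (auto simp: q_def confocal_def)
qed

context elliptic_modulus
begin

lemma bij_betw_jsn_jcn: "bij_betw (\<lambda>u. (jsn m u, jcn m u)) {0..<4 * ellK m} (ellipse_c 1 1)"
proof -
  have "(\<lambda>u. (jsn m u, jcn m u)) = (\<lambda>t. (sin t, cos t)) \<circ> jam m"
    by (simp add: fun_eq_iff jsn_def jcn_def)
  then show ?thesis using bij_betw_trans[OF bij_betw_jam_period bij_betw_sin_cos] by simp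
qed

lemma bij_betw_scaled_jsn_div_jcn_sq:
  assumes "0 < b"
  shows "bij_betw (\<lambda>v. (b * jsn m v / jcn m v)\<^sup>2) {0..<ellK m} {0..}"
proof -
  have "(\<lambda>v. (b * jsn m v / jcn m v)\<^sup>2) = (\<lambda>\<phi>. (b * tan \<phi>)\<^sup>2) \<circ> jam m"
    by (simp add: fun_eq_iff jsn_def jcn_def tan_def)
  then show ?thesis
    using bij_betw_trans[OF bij_betw_jam_quarter bij_betw_scaled_tan_sq[OF assms]] by simp
qed

end

section \<open>The parametrization\<close>

locale confocal_coordinates =
  fixes a b :: real
  assumes b_pos: "0 < b" and b_less_a: "b < a"
begin

abbreviation "M \<equiv> ecc a b"
abbreviation "K \<equiv> ellK M"

lemma a_pos: "0 < a"
  using b_pos b_less_a by linarith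

lemma a_sq_mult_ecc_sq: "a\<^sup>2 * M\<^sup>2 = a\<^sup>2 - b\<^sup>2"
proof -
  have "b\<^sup>2 \<le> a\<^sup>2" using b_pos b_less_a by (simp add: power_mono)
  then show ?thesis using a_pos by (simp add: ecc_def power_divide)
qed

lemma ecc_sq_less_1: "M\<^sup>2 < 1"
proof -
  have "a\<^sup>2 * M\<^sup>2 < a\<^sup>2 * 1" using a_sq_mult_ecc_sq b_pos by simp
  then show ?thesis using a_pos by simp
qed

sublocale elliptic_modulus M
  by unfold_locales (rule ecc_sq_less_1)

lemma Ymap_eq: "Ymap a b u v = (- a * jsn M u * jdn M v / jcn M v, b * jcn M u / jcn M v)"
  by (simp add: Ymap_def Let_def)

lemma a_sq_mult_jdn_sq: "a\<^sup>2 * (jdn M v)\<^sup>2 = a\<^sup>2 * (jcn M v)\<^sup>2 + b\<^sup>2 * (jsn M v)\<^sup>2"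
  using jdn_sq[of v] a_sq_mult_ecc_sq jsn_sq_add_jcn_sq[of M v] by algebra

definition ellipse_param :: "real \<Rightarrow> real" where
  "ellipse_param v = (b * jsn M v / jcn M v)\<^sup>2"

definition hyperbola_param :: "real \<Rightarrow> real" where
  "hyperbola_param u = - (a\<^sup>2 * (jcn M u)\<^sup>2 + b\<^sup>2 * (jsn M u)\<^sup>2)"

lemma bij_betw_ellipse_param: "bij_betw ellipse_param {0..<K} {0..}"
  unfolding ellipse_param_def[abs_def] by (rule bij_betw_scaled_jsn_div_jcn_sq[OF b_pos])

lemma bij_betw_Ymap_ellipse:
  assumes "v \<in> {0..<K}"
  shows "bij_betw (\<lambda>u. Ymap a b u v) {0..<4 * K} (confocal a b (ellipse_param v))"
proof -
  define \<alpha> where "\<alpha> = - a * jdn M v / jcn M v"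
  define \<beta> where "\<beta> = b / jcn M v"
  have c: "0 < jcn M v" using jcn_pos assms by simp
  have "confocal a b (ellipse_param v) = ellipse_c \<alpha> \<beta>"
  proof (rule confocal_eq_ellipse_c)
    show "\<alpha>\<^sup>2 = a\<^sup>2 + ellipse_param v"
      using a_sq_mult_jdn_sq[of v] c by (simp add: \<alpha>_def ellipse_param_def field_simps)
    have "b\<^sup>2 + ellipse_param v = b\<^sup>2 * ((jsn M v)\<^sup>2 + (jcn M v)\<^sup>2) / (jcn M v)\<^sup>2"
      using c by (simp add: ellipse_param_def field_simps)
    then show "\<beta>\<^sup>2 = b\<^sup>2 + ellipse_param v"
      by (simp add: \<beta>_def power_divide)
  qed
  moreover have "(\<lambda>u. Ymap a b u v) = (\<lambda>(s, c). (\<alpha> * s, \<beta> * c)) \<circ> (\<lambda>u. (jsn M u, jcn M u))"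
    by (simp add: fun_eq_iff Ymap_eq \<alpha>_def \<beta>_def)
  moreover have "\<alpha> \<noteq> 0" "\<beta> \<noteq> 0"
    using a_pos b_pos c jdn_pos[of v] by (auto simp: \<alpha>_def \<beta>_def)
  ultimately show ?thesis
    using bij_betw_trans[OF bij_betw_jsn_jcn bij_betw_scale_ellipse_c] by simp
qed

lemma Ymap_in_confocal_ellipse:
  "u \<in> {0..<4 * K} \<Longrightarrow> v \<in> {0..<K} \<Longrightarrow> Ymap a b u v \<in> confocal a b (ellipse_param v)"
  using bij_betw_apply[OF bij_betw_Ymap_ellipse] by blast

lemma inj_on_Ymap: "inj_on (\<lambda>(u, v). Ymap a b u v) ({0..<4 * K} \<times> {0..<K})"
proof (rule inj_onI, clarify)
  fix u v u' v'
  assume u: "u \<in> {0..<4 * K}" and v: "v \<in> {0..<K}" and u': "u' \<in> {0..<4 * K}"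
    and v': "v' \<in> {0..<K}" and eq: "Ymap a b u v = Ymap a b u' v'"
  have m: "Ymap a b u v \<in> confocal a b (ellipse_param v)"
    using u v by (rule Ymap_in_confocal_ellipse)
  have m': "Ymap a b u v \<in> confocal a b (ellipse_param v')"
    unfolding eq using u' v' by (rule Ymap_in_confocal_ellipse)
  have "0 \<le> ellipse_param v" "0 \<le> ellipse_param v'"
    using bij_betw_apply[OF bij_betw_ellipse_param] v v' by auto
  then have "ellipse_param v = ellipse_param v'"
    using a_pos b_pos by (intro confocal_parameter_unique[OF _ _ _ _ m m']) auto
  then have "v = v'"
    using inj_onD[OF bij_betw_imp_inj_on[OF bij_betw_ellipse_param]] v v' by blast
  moreover have "u = u'"
    using inj_onD[OF bij_betw_imp_inj_on[OF bij_betw_Ymap_ellipse[OF v]]] u u' eq \<open>v = v'\<close> by simp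
  ultimately show "u = u' \<and> v = v'" by simp
qed

lemma Ymap_image:
  "(\<lambda>(u, v). Ymap a b u v) ` ({0..<4 * K} \<times> {0..<K}) = {(x, y). x\<^sup>2 / a\<^sup>2 + y\<^sup>2 / b\<^sup>2 \<ge> 1}"
proof
  show "(\<lambda>(u, v). Ymap a b u v) ` ({0..<4 * K} \<times> {0..<K}) \<subseteq> {(x, y). x\<^sup>2 / a\<^sup>2 + y\<^sup>2 / b\<^sup>2 \<ge> 1}"
  proof
    fix p
    assume "p \<in> (\<lambda>(u, v). Ymap a b u v) ` ({0..<4 * K} \<times> {0..<K})"
    then obtain u v where u: "u \<in> {0..<4 * K}" and v: "v \<in> {0..<K}" and p: "p = Ymap a b u v"
      by auto
    show "p \<in> {(x, y). x\<^sup>2 / a\<^sup>2 + y\<^sup>2 / b\<^sup>2 \<ge> 1}"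
      using confocal_subset_exterior[of a b "ellipse_param v"] Ymap_in_confocal_ellipse[OF u v]
        bij_betw_apply[OF bij_betw_ellipse_param v] a_pos b_pos unfolding p by auto
  qed
next
  show "{(x, y). x\<^sup>2 / a\<^sup>2 + y\<^sup>2 / b\<^sup>2 \<ge> 1} \<subseteq> (\<lambda>(u, v). Ymap a b u v) ` ({0..<4 * K} \<times> {0..<K})"
  proof clarify
    fix x y :: real
    assume "x\<^sup>2 / a\<^sup>2 + y\<^sup>2 / b\<^sup>2 \<ge> 1"
    then obtain k where "0 \<le> k" and k: "(x, y) \<in> confocal a b k"
      using exterior_point_in_confocal[of a b x y] a_pos b_pos by auto
    then obtain v where v: "v \<in> {0..<K}" and "k = ellipse_param v"
      using bij_betw_imp_surj_on[OF bij_betw_ellipse_param] by (metis atLeast_iff imageE)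
    then obtain u where "u \<in> {0..<4 * K}" and "(x, y) = Ymap a b u v"
      using k bij_betw_imp_surj_on[OF bij_betw_Ymap_ellipse[OF v]] by (metis imageE)
    then show "(x, y) \<in> (\<lambda>(u, v). Ymap a b u v) ` ({0..<4 * K} \<times> {0..<K})"
      using v by (auto intro: image_eqI[of _ _ "(u, v)"])
  qed
qed

lemma hyperbola_param_bounds:
  assumes "jsn M u \<noteq> 0" "jcn M u \<noteq> 0"
  shows "- a\<^sup>2 < hyperbola_param u" "hyperbola_param u < - b\<^sup>2"
proof -
  have "b\<^sup>2 < a\<^sup>2" using b_pos b_less_a by (simp add: power_strict_mono)
  then have "b\<^sup>2 * (jsn M u)\<^sup>2 < a\<^sup>2 * (jsn M u)\<^sup>2" "b\<^sup>2 * (jcn M u)\<^sup>2 < a\<^sup>2 * (jcn M u)\<^sup>2"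
    using assms by simp_all
  moreover have "a\<^sup>2 = a\<^sup>2 * (jcn M u)\<^sup>2 + a\<^sup>2 * (jsn M u)\<^sup>2" "b\<^sup>2 = b\<^sup>2 * (jcn M u)\<^sup>2 + b\<^sup>2 * (jsn M u)\<^sup>2"
    using jsn_sq_add_jcn_sq[of M u] by algebra+
  ultimately show "- a\<^sup>2 < hyperbola_param u" "hyperbola_param u < - b\<^sup>2"
    unfolding hyperbola_param_def by linarith+
qed

lemma Ymap_in_confocal_hyperbola:
  assumes "jsn M u \<noteq> 0" "jcn M u \<noteq> 0" "v \<in> {0..<K}"
  shows "Ymap a b u v \<in> confocal a b (hyperbola_param u)"
proof -
  have c: "0 < jcn M v" using jcn_pos assms(3) by simp
  have ab: "a\<^sup>2 - b\<^sup>2 \<noteq> 0" using b_pos b_less_a by simp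
  have ka: "a\<^sup>2 + hyperbola_param u = (a\<^sup>2 - b\<^sup>2) * (jsn M u)\<^sup>2"
    and kb: "b\<^sup>2 + hyperbola_param u = - ((a\<^sup>2 - b\<^sup>2) * (jcn M u)\<^sup>2)"
    using jsn_sq_add_jcn_sq[of M u] unfolding hyperbola_param_def by algebra+
  have "(- a * jsn M u * jdn M v / jcn M v)\<^sup>2 / ((a\<^sup>2 - b\<^sup>2) * (jsn M u)\<^sup>2)
      = a\<^sup>2 * (jdn M v)\<^sup>2 / ((a\<^sup>2 - b\<^sup>2) * (jcn M v)\<^sup>2)"
    using assms(1) by (simp add: power_mult_distrib power_divide)
  moreover have "(b * jcn M u / jcn M v)\<^sup>2 / (- ((a\<^sup>2 - b\<^sup>2) * (jcn M u)\<^sup>2))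
      = - (b\<^sup>2 / ((a\<^sup>2 - b\<^sup>2) * (jcn M v)\<^sup>2))"
    using assms(2) by (simp add: power_mult_distrib power_divide)
  ultimately have "(- a * jsn M u * jdn M v / jcn M v)\<^sup>2 / ((a\<^sup>2 - b\<^sup>2) * (jsn M u)\<^sup>2)
      + (b * jcn M u / jcn M v)\<^sup>2 / (- ((a\<^sup>2 - b\<^sup>2) * (jcn M u)\<^sup>2))
      = (a\<^sup>2 * (jdn M v)\<^sup>2 - b\<^sup>2) / ((a\<^sup>2 - b\<^sup>2) * (jcn M v)\<^sup>2)"
    by (simp add: diff_divide_distrib)
  also have "a\<^sup>2 * (jdn M v)\<^sup>2 - b\<^sup>2 = (a\<^sup>2 - b\<^sup>2) * (jcn M v)\<^sup>2"
    using a_sq_mult_jdn_sq[of v] jsn_sq_add_jcn_sq[of M v] by algebra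
  finally show ?thesis
    using ab c by (simp add: confocal_def Ymap_eq ka kb)
qed

lemma Ymap_hyperbola_branch:
  assumes "jsn M u \<noteq> 0" "v \<in> {0..<K}"
  shows "0 < - sgn (jsn M u) * fst (Ymap a b u v)"
proof -
  have "- sgn (jsn M u) * fst (Ymap a b u v) = a * \<bar>jsn M u\<bar> * jdn M v / jcn M v"
    by (cases "0 < jsn M u") (auto simp: Ymap_eq sgn_if abs_if)
  also have "0 < a * \<bar>jsn M u\<bar> * jdn M v / jcn M v"
    using assms a_pos jdn_pos[of v] jcn_pos[of v] by (intro divide_pos_pos mult_pos_pos) auto
  finally show ?thesis .
qed

lemma jsn_jcn_in_ellipse_c: "(- a * jsn M w, b * jcn M w) \<in> ellipse_c a b"
  using a_pos b_pos jsn_sq_add_jcn_sq[of M w] by (simp add: ellipse_c_def power_mult_distrib)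

lemma Ymap_in_tangent_line:
  assumes "v \<in> {0..<K}" "w = u + v \<or> w = u - v"
  shows "Ymap a b u v \<in> tangent_line a b (- a * jsn M w, b * jcn M w)"
proof -
  have "jcn M v = jsn M u * jsn M w * jdn M v + jcn M u * jcn M w"
    using assms(2) jcn_eq_jsn_jsn_add_plus_jcn_jcn_add[of v u]
      jcn_eq_jsn_jsn_add_plus_jcn_jcn_add[of v "u - v"]
    by (auto simp: ac_simps)
  moreover have c: "0 < jcn M v" using assms(1) jcn_pos by simp
  moreover have "(- a * jsn M u * jdn M v / jcn M v) * (- a * jsn M w) / a\<^sup>2
      + (b * jcn M u / jcn M v) * (b * jcn M w) / b\<^sup>2
      = (jsn M u * jsn M w * jdn M v + jcn M u * jcn M w) / jcn M v"
    using a_pos b_pos c by (simp add: field_simps power2_eq_square)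
  ultimately show ?thesis by (simp add: tangent_line_def Ymap_eq)
qed

lemma confocal_hyperbola_through_Ymap:
  assumes "jsn M u \<noteq> 0" "jcn M u \<noteq> 0"
  shows "\<exists>k. - a\<^sup>2 < k \<and> k < - b\<^sup>2 \<and> (\<exists>s\<in>{-1, 1::real}. \<forall>v\<in>{0..<K}.
    Ymap a b u v \<in> confocal a b k \<and> s * fst (Ymap a b u v) > 0)"
proof (intro exI[of _ "hyperbola_param u"] conjI bexI[of _ "- sgn (jsn M u)"] ballI)
  show "- a\<^sup>2 < hyperbola_param u" "hyperbola_param u < - b\<^sup>2"
    using hyperbola_param_bounds assms by auto
  show "- sgn (jsn M u) \<in> {-1, 1}"
    using assms by (simp add: sgn_if)
  show "Ymap a b u v \<in> confocal a b (hyperbola_param u)" "- sgn (jsn M u) * fst (Ymap a b u v) > 0"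
    if "v \<in> {0..<K}" for v
    using that assms Ymap_in_confocal_hyperbola Ymap_hyperbola_branch by auto
qed

lemma image_Ymap_confocal_ellipse:
  assumes "v \<in> {0..<K}"
  shows "\<exists>k. - b\<^sup>2 < k \<and> (\<lambda>u. Ymap a b u v) ` {0..<4 * K} = confocal a b k"
proof -
  have "0 \<le> ellipse_param v" "0 < b\<^sup>2"
    using b_pos bij_betw_apply[OF bij_betw_ellipse_param assms] by auto
  then have "- b\<^sup>2 < ellipse_param v" by linarith
  then show ?thesis
    using bij_betw_imp_surj_on[OF bij_betw_Ymap_ellipse[OF assms]] by blast
qed

end

theorem theorem3:
  fixes a b :: real
  assumes "a > b" and "b > 0"
  shows "let m = ecc a b; K = ellK m; U = {0..<4 * K}; V = {0..<K}; Y = Ymap a b in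
     inj_on (\<lambda>(u, v). Y u v) (U \<times> V)
   \<and> (\<lambda>(u, v). Y u v) ` (U \<times> V) = {(x, y). x\<^sup>2 / a\<^sup>2 + y\<^sup>2 / b\<^sup>2 \<ge> 1}
   \<and> (\<forall>u\<in>U. jsn m u \<noteq> 0 \<and> jcn m u \<noteq> 0 \<longrightarrow>
        (\<exists>k. - a\<^sup>2 < k \<and> k < - b\<^sup>2 \<and>
           (\<exists>s\<in>{-1, 1::real}. \<forall>v\<in>V. Y u v \<in> confocal a b k \<and> s * fst (Y u v) > 0)))
   \<and> (\<forall>v\<in>V. \<exists>k. - b\<^sup>2 < k \<and> (\<lambda>u. Y u v) ` U = confocal a b k)
   \<and> (\<forall>t. \<exists>p\<in>ellipse_c a b. \<forall>u\<in>U. \<forall>v\<in>V. u + v = t \<longrightarrow> Y u v \<in> tangent_line a b p)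
   \<and> (\<forall>t. \<exists>p\<in>ellipse_c a b. \<forall>u\<in>U. \<forall>v\<in>V. u - v = t \<longrightarrow> Y u v \<in> tangent_line a b p)"
proof -
  interpret confocal_coordinates a b
    using assms by unfold_locales
  have tangent: "Ymap a b u v \<in> tangent_line a b (- a * jsn M t, b * jcn M t)"
    if "v \<in> {0..<K}" "u + v = t \<or> u - v = t" for u v t
    using Ymap_in_tangent_line that by auto
  show ?thesis
    unfolding Let_def
  proof (intro conjI ballI allI impI)
    fix t
    show "\<exists>p\<in>ellipse_c a b. \<forall>u\<in>{0..<4 * K}. \<forall>v\<in>{0..<K}. u + v = t \<longrightarrow> Ymap a b u v \<in> tangent_line a b p"
      "\<exists>p\<in>ellipse_c a b. \<forall>u\<in>{0..<4 * K}. \<forall>v\<in>{0..<K}. u - v = t \<longrightarrow> Ymap a b u v \<in> tangent_line a b p"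
      using tangent jsn_jcn_in_ellipse_c by blast+
  qed (use inj_on_Ymap Ymap_image confocal_hyperbola_through_Ymap image_Ymap_confocal_ellipse in simp_all)
qed

end
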